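(* Let $f:(\mathbb R^2,q)\to(\mathbb R^3,p)$ be a smooth germ with a corank 1 singularity at $q$ whose curvature parabola $\Delta_p$ is not a line (so that $\kappa_a(p)$ is defined). Then $\kappa_a(p)=0$ if and only if the axial vector $v_a$ is a binormal direction.
   Context: $T_pM=\operatorname{im}df_q$, $N_pM$ its orthogonal complement with a fixed orientation. First fundamental form $I(X,Y)=\langle df_qX,df_qY\rangle$; second fundamental form $II$: the symmetric bilinear map $T_q\mathbb R^2\times T_q\mathbb R^2\to N_pM$ with $II(\partial_u,\partial_u)=f_{uu}(q)^\perp$, $II(\partial_u,\partial_v)=f_{uv}(q)^\perp$, $II(\partial_v,\partial_v)=f_{vv}(q)^\perp$ ($\perp$ = orthogonal projection to $N_pM$); $II_\nu=\langle II,\nu\rangle$. Curvature parabola $\Delta_p=\{II(X,X):I(X,X)=1\}$; in coordinates with $f_v(q)=0$, $|f_u(q)|=1$ it is parametrized by $\eta(y)=II(\partial_u+y\partial_v,\partial_u+y\partial_v)$, $y\in\mathbb R$, and is a non-degenerate parabola, half-line, line or point. A nonzero $X\in T_q\mathbb R^2$ is asymptotic if there is a nonzero $\nu\in N_pM$ with $II_\nu(X,Y)=0$ for all $Y$; such $\nu$ is a binormal direction. Axial vector $v_a$: for a non-degenerate parabola, the unit vector along the axis of symmetry pointing to its interior; for a half-line, $\eta'(y)/|\eta'(y)|$ for any $y>0$ with $\eta'(y)\neq 0$; for a point $c\ne0$, the unit vector with $\{v_a,c/|c|\}$ a positively oriented orthonormal frame; for the origin, any unit vector. Axial curvature $\kappa_a(p)=\min_{y}\langle\eta(y),v_a\rangle$.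 *)

theory Defs
  imports "HOL-Analysis.Analysis"
begin

text \<open>Germs f : (R^2,q) -> (R^3,p); coordinates (u,v) on R^2 are the standard ones,
  index 1 = u, index 2 = v.\<close>

fun pd :: "2 list \<Rightarrow> (real^2 \<Rightarrow> real^3) \<Rightarrow> real^2 \<Rightarrow> real^3" where
  "pd [] g = g"
| "pd (i # is) g = (\<lambda>x. vector_derivative (\<lambda>t. pd is g (x + t *\<^sub>R axis i 1)) (at 0))"

definition smooth_on :: "(real^2) set \<Rightarrow> (real^2 \<Rightarrow> real^3) \<Rightarrow> bool" where
  "smooth_on U g \<longleftrightarrow> open U \<and>
     (\<forall>is. continuous_on U (pd is g) \<and>
        (\<forall>x\<in>U. \<forall>i. ((\<lambda>t. pd is g (x + t *\<^sub>R axis i 1))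
                     has_vector_derivative pd (i # is) g x) (at 0)))"

definition smooth_germ :: "(real^2 \<Rightarrow> real^3) \<Rightarrow> real^2 \<Rightarrow> bool" where
  "smooth_germ f q \<longleftrightarrow> (\<exists>U. q \<in> U \<and> smooth_on U f)"

definition fu :: "(real^2 \<Rightarrow> real^3) \<Rightarrow> real^2 \<Rightarrow> real^3" where "fu f q = pd [1] f q"
definition fv :: "(real^2 \<Rightarrow> real^3) \<Rightarrow> real^2 \<Rightarrow> real^3" where "fv f q = pd [2] f q"
definition fuu :: "(real^2 \<Rightarrow> real^3) \<Rightarrow> real^2 \<Rightarrow> real^3" where "fuu f q = pd [1,1] f q"
definition fuv :: "(real^2 \<Rightarrow> real^3) \<Rightarrow> real^2 \<Rightarrow> real^3" where "fuv f q = pd [2,1] f q"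
definition fvv :: "(real^2 \<Rightarrow> real^3) \<Rightarrow> real^2 \<Rightarrow> real^3" where "fvv f q = pd [2,2] f q"

definition df :: "(real^2 \<Rightarrow> real^3) \<Rightarrow> real^2 \<Rightarrow> real^2 \<Rightarrow> real^3" where
  "df f q X = (X $ 1) *\<^sub>R fu f q + (X $ 2) *\<^sub>R fv f q"

definition corank1 :: "(real^2 \<Rightarrow> real^3) \<Rightarrow> real^2 \<Rightarrow> bool" where
  "corank1 f q \<longleftrightarrow> dim (range (df f q)) = 1"

definition TpM :: "(real^2 \<Rightarrow> real^3) \<Rightarrow> real^2 \<Rightarrow> (real^3) set" where
  "TpM f q = range (df f q)"

definition NpM :: "(real^2 \<Rightarrow> real^3) \<Rightarrow> real^2 \<Rightarrow> (real^3) set" where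
  "NpM f q = {w. \<forall>t\<in>TpM f q. t \<bullet> w = 0}"

definition nproj :: "(real^2 \<Rightarrow> real^3) \<Rightarrow> real^2 \<Rightarrow> real^3 \<Rightarrow> real^3" where
  "nproj f q w = (THE n. n \<in> NpM f q \<and> w - n \<in> TpM f q)"

definition FF1 :: "(real^2 \<Rightarrow> real^3) \<Rightarrow> real^2 \<Rightarrow> real^2 \<Rightarrow> real^2 \<Rightarrow> real" where
  "FF1 f q X Y = df f q X \<bullet> df f q Y"

definition FF2 :: "(real^2 \<Rightarrow> real^3) \<Rightarrow> real^2 \<Rightarrow> real^2 \<Rightarrow> real^2 \<Rightarrow> real^3" where
  "FF2 f q X Y = nproj f q ((X$1 * Y$1) *\<^sub>R fuu f q + (X$1 * Y$2 + X$2 * Y$1) *\<^sub>R fuv f q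
                              + (X$2 * Y$2) *\<^sub>R fvv f q)"

definition curv_parabola :: "(real^2 \<Rightarrow> real^3) \<Rightarrow> real^2 \<Rightarrow> (real^3) set" where
  "curv_parabola f q = {FF2 f q X X | X. FF1 f q X X = 1}"

definition is_nondeg_parabola :: "(real^3) set \<Rightarrow> bool" where
  "is_nondeg_parabola S \<longleftrightarrow> (\<exists>A B C. \<not> dependent {B, C} \<and> B \<noteq> C \<and>
       S = {A + y *\<^sub>R B + y\<^sup>2 *\<^sub>R C | y. True})"

definition is_halfline_from :: "(real^3) set \<Rightarrow> real^3 \<Rightarrow> real^3 \<Rightarrow> bool" where
  "is_halfline_from S x0 w \<longleftrightarrow> w \<noteq> 0 \<and> S = {x0 + t *\<^sub>R w | t. t \<ge> 0}"

definition is_line :: "(real^3) set \<Rightarrow> bool" where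
  "is_line S \<longleftrightarrow> (\<exists>x0 w. w \<noteq> 0 \<and> S = {x0 + t *\<^sub>R w | t. True})"

text \<open>Orientation of N_pM: fixed by a nonzero tangent vector tau; a pair (a,b) in N_pM is
  positively oriented iff det(tau,a,b) > 0.\<close>
definition pos_oriented :: "real^3 \<Rightarrow> real^3 \<Rightarrow> real^3 \<Rightarrow> bool" where
  "pos_oriented tau a b \<longleftrightarrow> tau \<bullet> cross3 a b > 0"

text \<open>Axial vector (a relation, since for the origin any unit vector qualifies).
  Non-degenerate parabola: unit vector w along the axis of symmetry (the rotation by pi about the
  line through the vertex x0 in direction w maps the parabola onto itself; within the plane N_pM
  this is the reflection in the axis), pointing to the interior (x0 + w lies in the convex region
  bounded by the parabola, i.e. its convex hull).
  Half-line: the unit direction of the half-line (= eta'(y)/|eta'(y)| for large y).\<close>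
definition is_axial_vector :: "(real^2 \<Rightarrow> real^3) \<Rightarrow> real^2 \<Rightarrow> real^3 \<Rightarrow> real^3 \<Rightarrow> bool" where
  "is_axial_vector f q tau va \<longleftrightarrow>
     (let D = curv_parabola f q in
       (is_nondeg_parabola D \<and> norm va = 1 \<and> va \<in> NpM f q \<and>
          (\<exists>x0\<in>D. (\<lambda>x. x0 + (2 * ((x - x0) \<bullet> va)) *\<^sub>R va - (x - x0)) ` D = D
                 \<and> x0 + va \<in> convex hull D))
     \<or> (\<exists>x0 w. is_halfline_from D x0 w \<and> va = w /\<^sub>R norm w)
     \<or> (\<exists>c. D = {c} \<and> c \<noteq> 0 \<and> norm va = 1 \<and> va \<in> NpM f q \<and> va \<bullet> c = 0 \<and>
              pos_oriented tau va (c /\<^sub>R norm c))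
     \<or> (D = {0} \<and> norm va = 1 \<and> va \<in> NpM f q))"

text \<open>Axial curvature kappa_a = min_y <eta(y), v_a>; since eta parametrizes the curvature
  parabola, this is the minimum of <x, v_a> over the curvature parabola.\<close>
definition axial_curvature :: "(real^2 \<Rightarrow> real^3) \<Rightarrow> real^2 \<Rightarrow> real^3 \<Rightarrow> real" where
  "axial_curvature f q va = Inf ((\<lambda>x. x \<bullet> va) ` curv_parabola f q)"

definition is_binormal :: "(real^2 \<Rightarrow> real^3) \<Rightarrow> real^2 \<Rightarrow> real^3 \<Rightarrow> bool" where
  "is_binormal f q nu \<longleftrightarrow> nu \<in> NpM f q \<and> nu \<noteq> 0 \<and>
     (\<exists>X. X \<noteq> 0 \<and> (\<forall>Y. FF2 f q X Y \<bullet> nu = 0))"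

end

theory Submission
  imports Defs
begin

text \<open>In the paper's coordinates (\<open>f\<^sub>v(q) = 0\<close>, \<open>|f\<^sub>u(q)| = 1\<close>) the curvature parabola is
  \<open>\<eta>(y) = A + 2 y B + y\<^sup>2 C\<close> with \<open>A = II(\<partial>\<^sub>u,\<partial>\<^sub>u)\<close>, \<open>B = II(\<partial>\<^sub>u,\<partial>\<^sub>v)\<close>, \<open>C = II(\<partial>\<^sub>v,\<partial>\<^sub>v)\<close>.
  For a normal vector \<open>\<nu>\<close> the height \<open>\<langle>\<eta>(y), \<nu>\<rangle>\<close> is a real quadratic in \<open>y\<close> whose
  discriminant \<open>\<langle>A,\<nu>\<rangle>\<langle>C,\<nu>\<rangle> - \<langle>B,\<nu>\<rangle>\<^sup>2\<close> is the determinant of the binary form \<open>II\<^sub>\<nu>\<close>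
  (a Cauchy-Binet identity, since \<open>det(\<partial>\<^sub>u, \<partial>\<^sub>v) = 1\<close>), and \<open>II\<^sub>\<nu>\<close> is degenerate exactly
  when \<open>\<nu>\<close> is binormal. The axial vector is chosen so that the leading coefficient
  \<open>\<langle>C, v\<^sub>a\<rangle>\<close> is positive (parabola: the axis of symmetry points into the convex side;
  half-line: \<open>C\<close> points along it), or so that the height vanishes identically (point).
  In the first case \<open>min\<^sub>y \<langle>\<eta>(y), v\<^sub>a\<rangle>\<close> is the discriminant divided by \<open>\<langle>C, v\<^sub>a\<rangle>\<close>.\<close>

section \<open>Real quadratics and binary quadratic forms\<close>

lemma quartic_eq_0_coeffs:
  fixes c1 c2 c3 c4 :: real
  assumes "\<And>x. c1 * x + c2 * x^2 + c3 * x^3 + c4 * x^4 = 0"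
  shows "c1 = 0 \<and> c2 = 0 \<and> c3 = 0 \<and> c4 = 0"
proof -
  have "c1 + c2 + c3 + c4 = 0" using assms[of 1] by simp
  moreover have "-c1 + c2 - c3 + c4 = 0" using assms[of "-1"] by simp
  moreover have "2*c1 + 4*c2 + 8*c3 + 16*c4 = 0" using assms[of 2] by simp
  moreover have "-2*c1 + 4*c2 - 8*c3 + 16*c4 = 0" using assms[of "-2"] by simp
  ultimately show ?thesis by linarith
qed

lemma nonneg_quadratic_coeffs:
  fixes p b g :: real
  assumes nonneg: "\<And>s. 0 \<le> p + b * s + g * s\<^sup>2"
  shows "0 \<le> g" and "g = 0 \<Longrightarrow> b = 0"
proof -
  show "0 \<le> g"
  proof (rule ccontr)
    assume "\<not> 0 \<le> g"
    define s where "s = sqrt ((\<bar>p\<bar> + 1) / - g)"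
    have "s\<^sup>2 = (\<bar>p\<bar> + 1) / - g"
      unfolding s_def using \<open>\<not> 0 \<le> g\<close> by (simp add: divide_nonneg_neg)
    then have "g * s\<^sup>2 = - (\<bar>p\<bar> + 1)"
      using \<open>\<not> 0 \<le> g\<close> by simp
    moreover have "0 \<le> 2 * p + 2 * g * s\<^sup>2"
      using nonneg[of s] nonneg[of "- s"] by simp
    ultimately show False by linarith
  qed
next
  assume "g = 0"
  show "b = 0"
  proof (rule ccontr)
    assume "b \<noteq> 0"
    then have "p + b * (- (p + 1) / b) + g * (- (p + 1) / b)\<^sup>2 = -1"
      using \<open>g = 0\<close> by simp
    then show False using nonneg[of "- (p + 1) / b"] by linarith
  qed
qed

lemma Inf_quadratic_eq:
  fixes p r m :: real
  assumes "0 < m"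
  shows "Inf (range (\<lambda>s. p + 2 * r * s + m * s\<^sup>2)) = p - r\<^sup>2 / m"
proof (rule cInf_eq_minimum)
  have "p - r\<^sup>2 / m = p + 2*r*(-r/m) + m*(-r/m)\<^sup>2"
    using assms by (simp add: field_simps power2_eq_square)
  then show "p - r\<^sup>2 / m \<in> range (\<lambda>s. p + 2 * r * s + m * s\<^sup>2)" by blast
next
  fix x assume "x \<in> range (\<lambda>s. p + 2 * r * s + m * s\<^sup>2)"
  then obtain s where s: "x = p + 2 * r * s + m * s\<^sup>2" by auto
  have "x - (p - r\<^sup>2 / m) = m * (s + r/m)\<^sup>2"
    unfolding s using assms by (simp add: field_simps power2_eq_square)
  moreover have "0 \<le> m * (s + r/m)\<^sup>2" using assms by simp
  ultimately show "p - r\<^sup>2 / m \<le> x" by linarith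
qed

definition binary_form :: "real \<Rightarrow> real \<Rightarrow> real \<Rightarrow> real^2 \<Rightarrow> real^2 \<Rightarrow> real" where
  "binary_form a b c X Y = X$1*Y$1*a + (X$1*Y$2 + X$2*Y$1)*b + X$2*Y$2*c"

lemma binary_form_discriminant:
  "binary_form a b c X X * binary_form a b c Y Y - (binary_form a b c X Y)\<^sup>2
     = (a*c - b\<^sup>2) * (X$1*Y$2 - X$2*Y$1)\<^sup>2"
  unfolding binary_form_def by algebra

lemma degenerate_binary_form_iff:
  "(\<exists>X. X \<noteq> 0 \<and> (\<forall>Y. binary_form a b c X Y = 0)) \<longleftrightarrow> a*c = b\<^sup>2"
proof
  assume "\<exists>X. X \<noteq> 0 \<and> (\<forall>Y. binary_form a b c X Y = 0)"
  then obtain X where X: "X \<noteq> 0" "\<And>Y. binary_form a b c X Y = 0" by blast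
  have e1: "X$1*a + X$2*b = 0" using X(2)[of "vector [1,0]"] by (simp add: binary_form_def)
  have e2: "X$1*b + X$2*c = 0" using X(2)[of "vector [0,1]"] by (simp add: binary_form_def)
  have "X$1 \<noteq> 0 \<or> X$2 \<noteq> 0" using X(1) by (auto simp: vec_eq_iff forall_2)
  moreover have "X$1*(a*c - b\<^sup>2) = c*(X$1*a + X$2*b) - b*(X$1*b + X$2*c)"
    and "X$2*(a*c - b\<^sup>2) = a*(X$1*b + X$2*c) - b*(X$1*a + X$2*b)"
    by (simp_all add: algebra_simps power2_eq_square)
  ultimately show "a*c = b\<^sup>2" using e1 e2 by auto
next
  assume "a*c = b\<^sup>2"
  show "\<exists>X. X \<noteq> 0 \<and> (\<forall>Y. binary_form a b c X Y = 0)"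
  proof (cases "a = 0 \<and> b = 0")
    case True
    then show ?thesis
      by (intro exI[of _ "vector [1,0]"]) (auto simp: binary_form_def vec_eq_iff forall_2)
  next
    case False
    with \<open>a*c = b\<^sup>2\<close> show ?thesis
      by (intro exI[of _ "vector [b, -a]"])
        (auto simp: binary_form_def vec_eq_iff forall_2 algebra_simps power2_eq_square)
  qed
qed

text \<open>Implicit equation of the plane parabola \<open>s \<mapsto> (a\<^sub>1 s + a\<^sub>2 s\<^sup>2, b\<^sub>1 s + b\<^sub>2 s\<^sup>2)\<close>.\<close>
lemma parabola_implicit_eq:
  fixes a1 a2 b1 b2 s x y :: real
  assumes "x = a1 * s + a2 * s\<^sup>2" and "y = b1 * s + b2 * s\<^sup>2"
  shows "(a1*b2 - a2*b1) * (a1*y - b1*x) = (b2*x - a2*y)\<^sup>2"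
  unfolding assms by algebra

lemma reflection_symmetric_parabola_vertex:
  fixes a1 a2 b1 b2 :: real
  assumes dd: "a1*b2 - a2*b1 \<noteq> 0"
    and sym: "\<And>s. \<exists>s'. a1 * s' + a2 * s'\<^sup>2 = a1 * s + a2 * s\<^sup>2 \<and> b1 * s' + b2 * s'\<^sup>2 = -(b1 * s + b2 * s\<^sup>2)"
  shows "a1 = 0" and "a2 \<noteq> 0"
proof -
  define d where "d = a1*b2 - a2*b1"
  \<comment> \<open>\<open>(x, y)\<close> and \<open>(x, -y)\<close> both satisfy the implicit equation; subtract the two.\<close>
  have vanish: "(b1 * s + b2 * s\<^sup>2) * (d*a1 + 2*a2*b2*(a1 * s + a2 * s\<^sup>2)) = 0" for s
  proof -
    define x y where "x = a1 * s + a2 * s\<^sup>2" and "y = b1 * s + b2 * s\<^sup>2"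
    obtain s' where "x = a1 * s' + a2 * s'\<^sup>2" "- y = b1 * s' + b2 * s'\<^sup>2"
      using sym[of s] unfolding x_def y_def by (metis minus_minus)
    then have "d * (a1*(-y) - b1*x) = (b2*x - a2*(-y))\<^sup>2"
      unfolding d_def by (rule parabola_implicit_eq)
    moreover have "d * (a1*y - b1*x) = (b2*x - a2*y)\<^sup>2"
      unfolding d_def using x_def y_def by (rule parabola_implicit_eq)
    ultimately show ?thesis unfolding x_def[symmetric] y_def[symmetric] by algebra
  qed
  have "(b1*d*a1) * s + (b2*d*a1 + 2*a2*b2*a1*b1) * s^2 + (2*b1*a2^2*b2 + 2*b2^2*a2*a1) * s^3
          + (2*a2^2*b2^2) * s^4 = 0" for s
    using vanish[of s] by (simp add: algebra_simps power2_eq_square power3_eq_cube power4_eq_xxxx)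
  note coeffs = quartic_eq_0_coeffs[OF this]
  show "a1 = 0"
  proof (rule ccontr)
    assume "a1 \<noteq> 0"
    then have "b1 = 0" "b2 = 0" using coeffs dd by (auto simp: d_def)
    then show False using dd by simp
  qed
  then show "a2 \<noteq> 0" using dd by simp
qed

section \<open>Quadratic curves\<close>

definition quad_curve :: "'a::real_vector \<Rightarrow> 'a \<Rightarrow> 'a \<Rightarrow> 'a set" where
  "quad_curve A B C = range (\<lambda>s. A + s *\<^sub>R B + s\<^sup>2 *\<^sub>R C)"

lemma quad_curve_subset_line:
  assumes "quad_curve A B C \<subseteq> range (\<lambda>k. P + k *\<^sub>R v)"
  obtains k0 kb kc where "A = P + k0 *\<^sub>R v" "B = kb *\<^sub>R v" "C = kc *\<^sub>R v"
proof -
  have on_line: "\<exists>k. A + s *\<^sub>R B + s\<^sup>2 *\<^sub>R C = P + k *\<^sub>R v" for s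
    using assms unfolding quad_curve_def by blast
  obtain k0 where k0: "A = P + k0 *\<^sub>R v" using on_line[of 0] by auto
  obtain k1 where k1: "A + B + C = P + k1 *\<^sub>R v" using on_line[of 1] by auto
  obtain k2 where k2: "A - B + C = P + k2 *\<^sub>R v" using on_line[of "-1"] by auto
  have "2 *\<^sub>R B = (A + B + C) - (A - B + C)" by (simp add: scaleR_2)
  also have "\<dots> = (k1 - k2) *\<^sub>R v" unfolding k1 k2 by (simp add: scaleR_diff_left)
  finally have "(1/2 :: real) *\<^sub>R (2 *\<^sub>R B) = (1/2 :: real) *\<^sub>R ((k1 - k2) *\<^sub>R v)" by simp
  then have B: "B = ((k1 - k2) / 2) *\<^sub>R v" by simp
  have "C = (A + B + C) - A - B" by simp
  also have "\<dots> = (k1 - k0 - (k1 - k2) / 2) *\<^sub>R v"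
    by (subst k1) (simp only: k0 B scaleR_diff_left add_diff_cancel_left)
  finally have "C = (k1 - k0 - (k1 - k2) / 2) *\<^sub>R v" .
  with k0 B show thesis by (rule that)
qed

lemma quad_curve_singleton:
  assumes "quad_curve A B C = {c}"
  shows "A = c" and "B = 0" and "C = 0"
proof -
  have "quad_curve A B C \<subseteq> range (\<lambda>k. c + k *\<^sub>R 0)" using assms by simp
  then obtain k0 kb kc where "A = c + k0 *\<^sub>R 0" "B = kb *\<^sub>R 0" "C = kc *\<^sub>R 0"
    by (rule quad_curve_subset_line)
  then show "A = c" "B = 0" "C = 0" by simp_all
qed

lemma quad_curve_halfline:
  assumes H: "quad_curve A B C = {x0 + k *\<^sub>R w | k. k \<ge> 0}" and "w \<noteq> 0"
  obtains k where "k > 0" "C = k *\<^sub>R w"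
proof -
  have "quad_curve A B C \<subseteq> range (\<lambda>k. x0 + k *\<^sub>R w)" using H by auto
  then obtain k0 kb kc where A: "A = x0 + k0 *\<^sub>R w" and B: "B = kb *\<^sub>R w" and C: "C = kc *\<^sub>R w"
    by (rule quad_curve_subset_line)
  have "0 \<le> k0 + kb * s + kc * s\<^sup>2" for s
  proof -
    have "A + s *\<^sub>R B + s\<^sup>2 *\<^sub>R C \<in> quad_curve A B C" unfolding quad_curve_def by blast
    then obtain k where "k \<ge> 0" "A + s *\<^sub>R B + s\<^sup>2 *\<^sub>R C = x0 + k *\<^sub>R w" using H by auto
    moreover have "A + s *\<^sub>R B + s\<^sup>2 *\<^sub>R C = x0 + (k0 + kb * s + kc * s\<^sup>2) *\<^sub>R w"
      unfolding A B C by (simp add: algebra_simps)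
    ultimately show ?thesis using \<open>w \<noteq> 0\<close> by simp
  qed
  note coeffs = nonneg_quadratic_coeffs[OF this]
  have "kc \<noteq> 0"
  proof
    assume "kc = 0"
    then have "quad_curve A B C = {A}"
      using coeffs(2) unfolding quad_curve_def B C by auto
    moreover have "x0 \<in> quad_curve A B C" "x0 + w \<in> quad_curve A B C"
      unfolding H by (auto intro: exI[of _ 0] exI[of _ 1])
    ultimately show False using \<open>w \<noteq> 0\<close> by simp
  qed
  with coeffs(1) C show thesis by (intro that[of kc]) simp_all
qed

lemma quad_curve_subset_line_if_dependent:
  assumes "l \<noteq> 0 \<or> m \<noteq> 0" and "l *\<^sub>R B + m *\<^sub>R C = 0"
  obtains v where "quad_curve A B C \<subseteq> range (\<lambda>k. A + k *\<^sub>R v)"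
proof (cases "m = 0")
  case True
  with assms have "B = 0" by simp
  then show thesis by (intro that[of C]) (auto simp: quad_curve_def)
next
  case False
  have "C = (1/m) *\<^sub>R (l *\<^sub>R B + m *\<^sub>R C) + (- l / m) *\<^sub>R B"
    using False by (simp add: algebra_simps)
  with assms(2) have "C = (- l / m) *\<^sub>R B" by simp
  then have "A + s *\<^sub>R B + s\<^sup>2 *\<^sub>R C = A + (s - s\<^sup>2 * l / m) *\<^sub>R B" for s
    by (simp add: algebra_simps)
  then show thesis by (intro that[of B]) (auto simp: quad_curve_def)
qed

lemma nondeg_parabola_not_subset_line:
  assumes "is_nondeg_parabola D"
  shows "\<not> D \<subseteq> range (\<lambda>k. P + k *\<^sub>R v)"
proof
  assume line: "D \<subseteq> range (\<lambda>k. P + k *\<^sub>R v)"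
  obtain A B C where ind: "\<not> dependent {B, C}" "B \<noteq> C" and "D = quad_curve A B C"
    using assms unfolding is_nondeg_parabola_def quad_curve_def by (auto simp: full_SetCompr_eq)
  with line obtain k0 kb kc where B: "B = kb *\<^sub>R v" and C: "C = kc *\<^sub>R v"
    by (metis quad_curve_subset_line)
  have "C \<noteq> 0" using ind dependent_zero by blast
  then have "kc \<noteq> 0" using C by auto
  then have "B = (kb / kc) *\<^sub>R C" unfolding B C by simp
  then have "B \<in> span {C}" by (auto simp: span_singleton)
  moreover have "{B, C} - {B} = {C}" using ind(2) by auto
  ultimately have "dependent {B, C}" unfolding dependent_def by auto
  with ind show False by blast
qed

lemma orthogonal_to_cross3_frame_eq_0:
  fixes v t u :: "real^3"
  assumes "t \<bullet> t = 1" "u \<bullet> u = 1" "t \<bullet> u = 0"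
    and "v \<bullet> t = 0" "v \<bullet> u = 0" "v \<bullet> cross3 t u = 0"
  shows "v = 0"
proof -
  have "cross3 v (cross3 t u) = (v \<bullet> u) *\<^sub>R t - (v \<bullet> t) *\<^sub>R u"
    by (simp add: cross3_simps forall_3)
  then have "cross3 v (cross3 t u) = 0" using assms by simp
  moreover have "(norm (cross3 t u))\<^sup>2 = 1"
    using norm_cross_dot[of t u] assms by (simp add: norm_eq_sqrt_inner)
  ultimately have "(norm v)\<^sup>2 = 0"
    using norm_cross_dot[of v "cross3 t u"] assms by (simp add: power_mult_distrib)
  then show ?thesis by simp
qed

lemma singular_2x2_kernel:
  fixes p q r s :: real
  assumes "p * s - q * r = 0"
  obtains l m where "l \<noteq> 0 \<or> m \<noteq> 0" "l * p + m * q = 0" "l * r + m * s = 0"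
proof (cases "p = 0 \<and> q = 0")
  case True
  show thesis
  proof (cases "r = 0 \<and> s = 0")
    case True
    with \<open>p = 0 \<and> q = 0\<close> show thesis by (intro that[of 1 0]) simp_all
  next
    case False
    with \<open>p = 0 \<and> q = 0\<close> show thesis by (intro that[of s "- r"]) (auto simp: algebra_simps)
  qed
next
  case False
  with assms show thesis by (intro that[of q "- p"]) (auto simp: algebra_simps)
qed

lemma nondeg_quad_curve_det_ne_0:
  fixes A B C t u :: "real^3"
  assumes nd: "is_nondeg_parabola (quad_curve A B C)"
    and "B \<bullet> t = 0" "C \<bullet> t = 0" "t \<bullet> t = 1" "u \<bullet> u = 1" "u \<bullet> t = 0"
  shows "(B \<bullet> u) * (C \<bullet> cross3 t u) - (C \<bullet> u) * (B \<bullet> cross3 t u) \<noteq> 0"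
proof
  assume "(B \<bullet> u) * (C \<bullet> cross3 t u) - (C \<bullet> u) * (B \<bullet> cross3 t u) = 0"
  then obtain l m where lm: "l \<noteq> 0 \<or> m \<noteq> 0"
    and "l * (B \<bullet> u) + m * (C \<bullet> u) = 0" "l * (B \<bullet> cross3 t u) + m * (C \<bullet> cross3 t u) = 0"
    by (rule singular_2x2_kernel)
  with assms have "l *\<^sub>R B + m *\<^sub>R C = 0"
    by (intro orthogonal_to_cross3_frame_eq_0[of t u]) (simp_all add: inner_add_left inner_commute[of u t])
  with lm obtain v where "quad_curve A B C \<subseteq> range (\<lambda>k. A + k *\<^sub>R v)"
    by (rule quad_curve_subset_line_if_dependent)
  with nd show False using nondeg_parabola_not_subset_line by blast
qed

text \<open>In coordinates \<open>(x - x\<^sub>0) \<bullet> u\<close>, \<open>(x - x\<^sub>0) \<bullet> e\<close> the curve is a plane parabola through the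
  origin that is symmetric under \<open>(x, y) \<mapsto> (x, -y)\<close>; so its vertex is the origin and it opens
  along \<open>\<plusminus>u\<close>, and the convex hull condition selects \<open>+u\<close>.\<close>
lemma quad_curve_axis_direction:
  fixes A B C u e x0 :: "'a::real_inner"
  assumes u: "u \<bullet> u = 1" and ue: "u \<bullet> e = 0"
    and det: "(B \<bullet> u) * (C \<bullet> e) - (C \<bullet> u) * (B \<bullet> e) \<noteq> 0"
    and x0: "x0 \<in> quad_curve A B C"
    and sym: "(\<lambda>x. x0 + (2 * ((x - x0) \<bullet> u)) *\<^sub>R u - (x - x0)) ` quad_curve A B C = quad_curve A B C"
    and hull: "x0 + u \<in> convex hull quad_curve A B C"
  shows "C \<bullet> u > 0"
proof -
  obtain s0 where s0: "x0 = A + s0 *\<^sub>R B + s0\<^sup>2 *\<^sub>R C" using x0 by (auto simp: quad_curve_def)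
  define a1 b1 where "a1 = (B + (2 * s0) *\<^sub>R C) \<bullet> u" and "b1 = (B + (2 * s0) *\<^sub>R C) \<bullet> e"
  define P where "P s = A + (s0 + s) *\<^sub>R B + (s0 + s)\<^sup>2 *\<^sub>R C" for s
  have curve: "quad_curve A B C = range P"
  proof -
    have "range P = (\<lambda>s. A + s *\<^sub>R B + s\<^sup>2 *\<^sub>R C) ` range (\<lambda>s. s0 + s)"
      unfolding P_def image_image ..
    also have "range (\<lambda>s. s0 + s) = UNIV"
      by (rule surjI[of _ "\<lambda>x. x - s0"]) simp
    finally show ?thesis unfolding quad_curve_def ..
  qed
  have Pu: "(P s - x0) \<bullet> u = a1 * s + (C \<bullet> u) * s\<^sup>2"
    and Pe: "(P s - x0) \<bullet> e = b1 * s + (C \<bullet> e) * s\<^sup>2" for s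
    unfolding P_def s0 a1_def b1_def
    by (simp_all add: inner_add_left inner_diff_left algebra_simps power2_eq_square)
  have "a1 * (C \<bullet> e) - (C \<bullet> u) * b1 \<noteq> 0"
    using det unfolding a1_def b1_def by (simp add: inner_add_left algebra_simps)
  moreover have "\<exists>s'. a1 * s' + (C \<bullet> u) * s'\<^sup>2 = a1 * s + (C \<bullet> u) * s\<^sup>2
           \<and> b1 * s' + (C \<bullet> e) * s'\<^sup>2 = - (b1 * s + (C \<bullet> e) * s\<^sup>2)" for s
  proof -
    have "x0 + (2 * ((P s - x0) \<bullet> u)) *\<^sub>R u - (P s - x0) \<in> range P"
      using sym unfolding curve by blast
    then obtain s' where "P s' = x0 + (2 * ((P s - x0) \<bullet> u)) *\<^sub>R u - (P s - x0)" by auto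
    then have "(P s' - x0) \<bullet> u = (P s - x0) \<bullet> u" "(P s' - x0) \<bullet> e = - ((P s - x0) \<bullet> e)"
      using u ue by (simp_all add: inner_diff_left inner_add_left)
    then show ?thesis unfolding Pu Pe by blast
  qed
  ultimately have "a1 = 0" and "C \<bullet> u \<noteq> 0"
    by (rule reflection_symmetric_parabola_vertex)+
  moreover have "\<not> C \<bullet> u < 0"
  proof
    assume "C \<bullet> u < 0"
    then have "(P s - x0) \<bullet> u \<le> 0" for s
      using Pu[of s] \<open>a1 = 0\<close> by (simp add: mult_nonpos_nonneg)
    then have "quad_curve A B C \<subseteq> {x. x \<bullet> u \<le> x0 \<bullet> u}"
      unfolding curve by (auto simp: inner_diff_left)
    then have "convex hull quad_curve A B C \<subseteq> {x. x \<bullet> u \<le> x0 \<bullet> u}"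
      by (simp add: hull_minimal convex_halfspace_le inner_commute[of _ u])
    with hull u show False by (auto simp: inner_add_left)
  qed
  ultimately show ?thesis by linarith
qed

lemma nondeg_quad_curve_axis_direction:
  fixes A B C t u x0 :: "real^3"
  assumes nd: "is_nondeg_parabola (quad_curve A B C)"
    and "B \<bullet> t = 0" "C \<bullet> t = 0" "t \<bullet> t = 1" "u \<bullet> u = 1" "u \<bullet> t = 0"
    and "x0 \<in> quad_curve A B C"
    and "(\<lambda>x. x0 + (2 * ((x - x0) \<bullet> u)) *\<^sub>R u - (x - x0)) ` quad_curve A B C = quad_curve A B C"
    and "x0 + u \<in> convex hull quad_curve A B C"
  shows "C \<bullet> u > 0"
proof (rule quad_curve_axis_direction[of u "cross3 t u"])
  show "u \<bullet> cross3 t u = 0" by (simp add: dot_cross_self)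
  show "(B \<bullet> u) * (C \<bullet> cross3 t u) - (C \<bullet> u) * (B \<bullet> cross3 t u) \<noteq> 0"
    using nondeg_quad_curve_det_ne_0 assms(1-6) .
qed (use assms in auto)

lemma Inf_inner_quad_curve_eq_0_iff:
  fixes A B C \<nu> :: "'a::real_inner"
  assumes "0 < C \<bullet> \<nu> \<or> (A \<bullet> \<nu> = 0 \<and> B \<bullet> \<nu> = 0 \<and> C \<bullet> \<nu> = 0)"
  shows "Inf ((\<lambda>x. x \<bullet> \<nu>) ` quad_curve A (2 *\<^sub>R B) C) = 0 \<longleftrightarrow> (A \<bullet> \<nu>) * (C \<bullet> \<nu>) = (B \<bullet> \<nu>)\<^sup>2"
proof -
  have heights: "(\<lambda>x. x \<bullet> \<nu>) ` quad_curve A (2 *\<^sub>R B) C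
      = range (\<lambda>s. A \<bullet> \<nu> + 2 * (B \<bullet> \<nu>) * s + (C \<bullet> \<nu>) * s\<^sup>2)"
    unfolding quad_curve_def image_image by (simp add: inner_add_left algebra_simps)
  from assms show ?thesis
  proof
    assume "0 < C \<bullet> \<nu>"
    then show ?thesis
      unfolding heights Inf_quadratic_eq[OF \<open>0 < C \<bullet> \<nu>\<close>] by (simp add: field_simps)
  qed (simp add: heights)
qed

section \<open>Corank-one frames\<close>

text \<open>\<open>du\<close>, \<open>dv\<close> play the role of the paper's \<open>\<partial>\<^sub>u\<close>, \<open>\<partial>\<^sub>v\<close> (with \<open>f\<^sub>v(q) = 0\<close>, \<open>|f\<^sub>u(q)| = 1\<close>);
  the unit determinant makes the discriminant of \<open>\<eta>\<close> equal to that of \<open>II\<^sub>\<nu>\<close>.\<close>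
locale corank1_frame =
  fixes f :: "real^2 \<Rightarrow> real^3" and q :: "real^2" and t :: "real^3" and du dv :: "real^2"
  assumes unit_t: "t \<bullet> t = 1"
    and df_du: "df f q du = t" and df_dv: "df f q dv = 0"
    and det_du_dv: "du$1 * dv$2 - du$2 * dv$1 = 1"
begin

lemma df_linear: "df f q (a *\<^sub>R X + b *\<^sub>R Y) = a *\<^sub>R df f q X + b *\<^sub>R df f q Y"
  unfolding df_def by (simp add: algebra_simps)

lemma decompose_du_dv: "X = (X$1 * dv$2 - X$2 * dv$1) *\<^sub>R du + (du$1 * X$2 - du$2 * X$1) *\<^sub>R dv"
proof -
  have "X$1 = (X$1 * dv$2 - X$2 * dv$1) * du$1 + (du$1 * X$2 - du$2 * X$1) * dv$1"
    and "X$2 = (X$1 * dv$2 - X$2 * dv$1) * du$2 + (du$1 * X$2 - du$2 * X$1) * dv$2"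
    using det_du_dv by algebra+
  then show ?thesis by (simp add: vec_eq_iff forall_2)
qed

lemma df_eq: "df f q X = (X$1 * dv$2 - X$2 * dv$1) *\<^sub>R t"
  by (subst decompose_du_dv) (simp add: df_linear df_du df_dv)

lemma TpM_eq: "TpM f q = range (\<lambda>k. k *\<^sub>R t)"
proof -
  have "df f q (k *\<^sub>R du) = k *\<^sub>R t" for k
    using df_linear[of k du 0 du] by (simp add: df_du)
  then have "range (\<lambda>k. k *\<^sub>R t) \<subseteq> range (df f q)"
    by (metis image_subsetI rangeI)
  moreover have "range (df f q) \<subseteq> range (\<lambda>k. k *\<^sub>R t)"
    by (auto simp: df_eq)
  ultimately show ?thesis unfolding TpM_def by blast
qed

lemma NpM_eq: "NpM f q = {w. w \<bullet> t = 0}"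
  unfolding NpM_def TpM_eq by (auto simp: inner_commute)

lemma nproj_eq: "nproj f q w = w - (w \<bullet> t) *\<^sub>R t"
  unfolding nproj_def
proof (rule the_equality)
  have "(w \<bullet> t) *\<^sub>R t \<in> range (\<lambda>k. k *\<^sub>R t)" by (rule rangeI)
  then show "w - (w \<bullet> t) *\<^sub>R t \<in> NpM f q \<and> w - (w - (w \<bullet> t) *\<^sub>R t) \<in> TpM f q"
    unfolding NpM_eq TpM_eq using unit_t by (simp add: inner_diff_left)
next
  fix n assume "n \<in> NpM f q \<and> w - n \<in> TpM f q"
  then obtain k where n: "n \<bullet> t = 0" and "w - n = k *\<^sub>R t" unfolding NpM_eq TpM_eq by auto
  then have w: "w = k *\<^sub>R t + n" by (simp add: diff_eq_eq)
  then have "w \<bullet> t = k" using n unit_t by (simp add: inner_add_left)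
  with w show "n = w - (w \<bullet> t) *\<^sub>R t" by simp
qed

lemma FF2_eq:
  "FF2 f q X Y = (X$1 * Y$1) *\<^sub>R nproj f q (fuu f q)
     + (X$1 * Y$2 + X$2 * Y$1) *\<^sub>R nproj f q (fuv f q) + (X$2 * Y$2) *\<^sub>R nproj f q (fvv f q)"
  unfolding FF2_def nproj_eq by (simp add: vec_eq_iff inner_add_left algebra_simps)

lemma FF2_orthogonal: "FF2 f q X Y \<bullet> t = 0"
  unfolding FF2_def nproj_eq using unit_t by (simp add: inner_diff_left)

lemma inner_FF2:
  assumes "\<nu> \<bullet> t = 0"
  shows "FF2 f q X Y \<bullet> \<nu> = binary_form (fuu f q \<bullet> \<nu>) (fuv f q \<bullet> \<nu>) (fvv f q \<bullet> \<nu>) X Y"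
  unfolding FF2_eq nproj_eq binary_form_def using assms
  by (simp add: inner_add_left inner_diff_left inner_commute[of t] algebra_simps)

lemma FF2_add_scaleR:
  "FF2 f q (X + s *\<^sub>R Y) (X + s *\<^sub>R Y)
     = FF2 f q X X + s *\<^sub>R (2 *\<^sub>R FF2 f q X Y) + s\<^sup>2 *\<^sub>R FF2 f q Y Y"
  unfolding FF2_eq by (simp add: vec_eq_iff algebra_simps power2_eq_square)

lemma FF2_scaleR: "FF2 f q (c *\<^sub>R X) (c *\<^sub>R X) = c\<^sup>2 *\<^sub>R FF2 f q X X"
  unfolding FF2_eq by (simp add: vec_eq_iff algebra_simps power2_eq_square)

lemma FF1_eq: "FF1 f q X X = (X$1 * dv$2 - X$2 * dv$1)\<^sup>2"
  unfolding FF1_def df_eq using unit_t by (simp add: power2_eq_square)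

lemma curv_parabola_eq_quad_curve:
  "curv_parabola f q = quad_curve (FF2 f q du du) (2 *\<^sub>R FF2 f q du dv) (FF2 f q dv dv)"
proof -
  have "curv_parabola f q = range (\<lambda>s. FF2 f q (du + s *\<^sub>R dv) (du + s *\<^sub>R dv))"
  proof (intro equalityI subsetI)
    fix x assume "x \<in> curv_parabola f q"
    then obtain X where x: "x = FF2 f q X X" and "FF1 f q X X = 1"
      unfolding curv_parabola_def by auto
    define \<sigma> c where "\<sigma> = X$1 * dv$2 - X$2 * dv$1" and "c = du$1 * X$2 - du$2 * X$1"
    have "\<sigma>\<^sup>2 = 1" using \<open>FF1 f q X X = 1\<close> unfolding FF1_eq \<sigma>_def .
    define s where "s = \<sigma> * c"
    have "\<sigma> *\<^sub>R (du + s *\<^sub>R dv) = \<sigma> *\<^sub>R du + (\<sigma>\<^sup>2 * c) *\<^sub>R dv"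
      unfolding s_def by (simp add: scaleR_add_right power2_eq_square mult.assoc)
    then have "X = \<sigma> *\<^sub>R (du + s *\<^sub>R dv)"
      using decompose_du_dv[of X] \<open>\<sigma>\<^sup>2 = 1\<close> unfolding \<sigma>_def c_def by simp
    then have "x = FF2 f q (du + s *\<^sub>R dv) (du + s *\<^sub>R dv)"
      unfolding x using \<open>\<sigma>\<^sup>2 = 1\<close> by (simp add: FF2_scaleR)
    then show "x \<in> range (\<lambda>s. FF2 f q (du + s *\<^sub>R dv) (du + s *\<^sub>R dv))" by blast
  next
    fix x assume "x \<in> range (\<lambda>s. FF2 f q (du + s *\<^sub>R dv) (du + s *\<^sub>R dv))"
    moreover have "FF1 f q (du + s *\<^sub>R dv) (du + s *\<^sub>R dv) = 1" for s
      unfolding FF1_def using df_linear[of 1 du s dv] unit_t by (simp add: df_du df_dv)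
    ultimately show "x \<in> curv_parabola f q" unfolding curv_parabola_def by blast
  qed
  then show ?thesis unfolding quad_curve_def FF2_add_scaleR .
qed

lemma binormal_iff_degenerate:
  assumes "\<nu> \<bullet> t = 0" and "\<nu> \<noteq> 0"
  shows "is_binormal f q \<nu> \<longleftrightarrow> (fuu f q \<bullet> \<nu>) * (fvv f q \<bullet> \<nu>) = (fuv f q \<bullet> \<nu>)\<^sup>2"
  using assms unfolding is_binormal_def NpM_eq
  by (simp add: inner_FF2 degenerate_binary_form_iff)

lemma parabola_discriminant:
  assumes "\<nu> \<bullet> t = 0"
  shows "(FF2 f q du du \<bullet> \<nu>) * (FF2 f q dv dv \<bullet> \<nu>) - (FF2 f q du dv \<bullet> \<nu>)\<^sup>2
     = (fuu f q \<bullet> \<nu>) * (fvv f q \<bullet> \<nu>) - (fuv f q \<bullet> \<nu>)\<^sup>2"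
  unfolding inner_FF2[OF assms] binary_form_discriminant det_du_dv by simp

lemma axial_vector_cases:
  assumes "is_axial_vector f q tau va"
  shows "va \<bullet> t = 0" and "va \<noteq> 0"
    and "0 < FF2 f q dv dv \<bullet> va
         \<or> (FF2 f q du du \<bullet> va = 0 \<and> FF2 f q du dv \<bullet> va = 0 \<and> FF2 f q dv dv \<bullet> va = 0)"
proof -
  define A B C where "A = FF2 f q du du" and "B = 2 *\<^sub>R FF2 f q du dv" and "C = FF2 f q dv dv"
  have Bt: "B \<bullet> t = 0" and Ct: "C \<bullet> t = 0" unfolding B_def C_def by (simp_all add: FF2_orthogonal)
  have point: "va \<bullet> t = 0 \<and> va \<noteq> 0 \<and> (0 < C \<bullet> va \<or> (A \<bullet> va = 0 \<and> B \<bullet> va = 0 \<and> C \<bullet> va = 0))"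
    if "quad_curve A B C = {c}" "norm va = 1" "va \<in> {w. w \<bullet> t = 0}" "va \<bullet> c = 0" for c
  proof -
    from \<open>quad_curve A B C = {c}\<close> have "A = c" "B = 0" "C = 0"
      by (rule quad_curve_singleton)+
    with that show ?thesis by (auto simp: inner_commute)
  qed
  have "va \<bullet> t = 0 \<and> va \<noteq> 0 \<and> (0 < C \<bullet> va \<or> (A \<bullet> va = 0 \<and> B \<bullet> va = 0 \<and> C \<bullet> va = 0))"
    using assms unfolding is_axial_vector_def Let_def curv_parabola_eq_quad_curve
      A_def[symmetric] B_def[symmetric] C_def[symmetric] NpM_eq
  proof (elim disjE conjE exE bexE)
    fix x0
    assume "is_nondeg_parabola (quad_curve A B C)" "norm va = 1" "va \<in> {w. w \<bullet> t = 0}"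
      and "x0 \<in> quad_curve A B C"
      and "(\<lambda>x. x0 + (2 * ((x - x0) \<bullet> va)) *\<^sub>R va - (x - x0)) ` quad_curve A B C = quad_curve A B C"
      and "x0 + va \<in> convex hull quad_curve A B C"
    moreover have "va \<bullet> va = 1" and "va \<bullet> t = 0"
      using \<open>norm va = 1\<close> \<open>va \<in> {w. w \<bullet> t = 0}\<close> by (simp_all add: norm_eq_1)
    ultimately have "0 < C \<bullet> va"
      using Bt Ct unit_t by (blast intro: nondeg_quad_curve_axis_direction)
    with \<open>va \<bullet> t = 0\<close> \<open>norm va = 1\<close> show ?thesis by auto
  next
    fix x0 w
    assume "is_halfline_from (quad_curve A B C) x0 w" and va: "va = w /\<^sub>R norm w"
    then have "quad_curve A B C = {x0 + k *\<^sub>R w | k. k \<ge> 0}" and "w \<noteq> 0"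
      unfolding is_halfline_from_def by auto
    then obtain k where "k > 0" "C = k *\<^sub>R w" by (rule quad_curve_halfline)
    then have "w \<bullet> t = 0" using Ct by simp
    moreover have "C \<bullet> va = k * norm w"
      unfolding va \<open>C = k *\<^sub>R w\<close> using \<open>w \<noteq> 0\<close> by (simp add: dot_square_norm power2_eq_square)
    ultimately show ?thesis using va \<open>w \<noteq> 0\<close> \<open>k > 0\<close> by simp
  next
    fix c
    assume "quad_curve A B C = {c}" "norm va = 1" "va \<in> {w. w \<bullet> t = 0}" "va \<bullet> c = 0"
    then show ?thesis using point by blast
  next
    assume "quad_curve A B C = {0}" "norm va = 1" "va \<in> {w. w \<bullet> t = 0}"
    then show ?thesis using point by simp
  qed
  then show "va \<bullet> t = 0" "va \<noteq> 0"
    "0 < FF2 f q dv dv \<bullet> va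
     \<or> (FF2 f q du du \<bullet> va = 0 \<and> FF2 f q du dv \<bullet> va = 0 \<and> FF2 f q dv dv \<bullet> va = 0)"
    unfolding A_def B_def C_def by auto
qed

end

lemma corank1_tangent_line:
  assumes "corank1 f q"
  obtains t \<alpha> \<beta> where "t \<bullet> t = 1" "fu f q = \<alpha> *\<^sub>R t" "fv f q = \<beta> *\<^sub>R t" "\<alpha>\<^sup>2 + \<beta>\<^sup>2 \<noteq> 0"
proof -
  obtain G where G: "G \<subseteq> range (df f q)" "independent G" "range (df f q) \<subseteq> span G"
    and "card G = dim (range (df f q))"
    by (rule basis_exists)
  with assms have "card G = 1" unfolding corank1_def by simp
  then obtain g where g: "G = {g}" by (auto simp: card_1_singleton_iff)
  with G have "g \<noteq> 0" by simp
  have "fu f q \<in> range (df f q)" "fv f q \<in> range (df f q)"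
    using rangeI[of "df f q" "vector [1, 0]"] rangeI[of "df f q" "vector [0, 1]"]
    by (simp_all add: df_def)
  with G(3) g have "fu f q \<in> span {g}" "fv f q \<in> span {g}" by auto
  then obtain a b where ab: "fu f q = a *\<^sub>R g" "fv f q = b *\<^sub>R g"
    unfolding span_singleton by auto
  have "a\<^sup>2 + b\<^sup>2 \<noteq> 0"
  proof
    assume "a\<^sup>2 + b\<^sup>2 = 0"
    then have "df f q = (\<lambda>X. 0)" using ab by (simp add: df_def fun_eq_iff)
    with G(1) g \<open>g \<noteq> 0\<close> show False by auto
  qed
  show thesis
  proof (rule that[of "g /\<^sub>R norm g" "a * norm g" "b * norm g"])
    show "(g /\<^sub>R norm g) \<bullet> (g /\<^sub>R norm g) = 1"
      using \<open>g \<noteq> 0\<close> by (simp add: dot_square_norm power2_eq_square)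
    show "fu f q = (a * norm g) *\<^sub>R (g /\<^sub>R norm g)" "fv f q = (b * norm g) *\<^sub>R (g /\<^sub>R norm g)"
      using ab \<open>g \<noteq> 0\<close> by simp_all
    show "(a * norm g)\<^sup>2 + (b * norm g)\<^sup>2 \<noteq> 0"
      using \<open>a\<^sup>2 + b\<^sup>2 \<noteq> 0\<close> \<open>g \<noteq> 0\<close> by (simp add: power_mult_distrib flip: distrib_right)
  qed
qed

lemma corank1_frame_exists:
  assumes "corank1 f q"
  obtains t du dv where "corank1_frame f q t du dv"
proof -
  obtain t \<alpha> \<beta> where t: "t \<bullet> t = 1" and fu: "fu f q = \<alpha> *\<^sub>R t" and fv: "fv f q = \<beta> *\<^sub>R t"
    and "\<alpha>\<^sup>2 + \<beta>\<^sup>2 \<noteq> 0"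
    using assms by (rule corank1_tangent_line)
  define n where "n = \<alpha>\<^sup>2 + \<beta>\<^sup>2"
  define du dv :: "real^2" where "du = vector [\<alpha> / n, \<beta> / n]" and "dv = vector [- \<beta>, \<alpha>]"
  have unit: "\<alpha> * (\<alpha> / n) + \<beta> * (\<beta> / n) = 1"
    using \<open>\<alpha>\<^sup>2 + \<beta>\<^sup>2 \<noteq> 0\<close> unfolding n_def
    by (simp add: add_divide_distrib[symmetric] power2_eq_square)
  show thesis
  proof (rule that, unfold_locales)
    have "df f q du = (\<alpha> * (\<alpha> / n) + \<beta> * (\<beta> / n)) *\<^sub>R t"
      unfolding df_def du_def fu fv by (simp add: algebra_simps)
    then show "df f q du = t" unfolding unit by simp
    show "df f q dv = 0" unfolding df_def dv_def fu fv by (simp add: algebra_simps)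
    have "du$1 * dv$2 - du$2 * dv$1 = \<alpha> * (\<alpha> / n) + \<beta> * (\<beta> / n)"
      unfolding du_def dv_def by (simp add: algebra_simps)
    then show "du$1 * dv$2 - du$2 * dv$1 = 1" unfolding unit .
  qed (fact t)
qed

theorem mainTheorem9:
  fixes f :: "real^2 \<Rightarrow> real^3" and q :: "real^2" and tau va :: "real^3"
  assumes "smooth_germ f q"
    and "corank1 f q"
    and "\<not> is_line (curv_parabola f q)"
    and "tau \<in> TpM f q" and "tau \<noteq> 0"
    and "is_axial_vector f q tau va"
  shows "axial_curvature f q va = 0 \<longleftrightarrow> is_binormal f q va"
proof -
  \<comment> \<open>Only the 2-jet of \<open>f\<close> at \<open>q\<close> matters, and \<open>tau\<close> only orients \<open>N\<^sub>pM\<close>; a line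
    admits no axial vector, so the non-line hypothesis is implied by the last one.\<close>
  obtain t du dv where "corank1_frame f q t du dv"
    using assms(2) by (rule corank1_frame_exists)
  then interpret corank1_frame f q t du dv .
  note va = axial_vector_cases[OF assms(6)]
  have "axial_curvature f q va = 0
      \<longleftrightarrow> (FF2 f q du du \<bullet> va) * (FF2 f q dv dv \<bullet> va) = (FF2 f q du dv \<bullet> va)\<^sup>2"
    unfolding axial_curvature_def curv_parabola_eq_quad_curve
    using va(3) by (rule Inf_inner_quad_curve_eq_0_iff)
  also have "\<dots> \<longleftrightarrow> (fuu f q \<bullet> va) * (fvv f q \<bullet> va) = (fuv f q \<bullet> va)\<^sup>2"
    using parabola_discriminant[OF va(1)] by linarith
  also have "\<dots> \<longleftrightarrow> is_binormal f q va"
    using binormal_iff_degenerate[OF va(1,2)] by simp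
  finally show ?thesis .
qed

end
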